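(* Let $G=SU(3)\rtimes\mathbb{Z}_2$ and write $H^*(BG;\mathbb{Z}_2)=\mathbb{Z}_2[y_1,y_4,y_6]$ with $\deg y_i=i$ and $Sq^1(y_1)=y_1^2$, $Sq^1(y_4)=0$, $Sq^1(y_6)=y_1y_6$. Then the $Sq^1$-homology is $$H(H^*(BG;\mathbb{Z}_2),Sq^1)\cong\mathbb{Z}_2[y_4,y_6^2].$$
   Context: $\mathbb{Z}_2$ acts on $SU(3)$ by complex conjugation. The Steenrod square $Sq^1$ satisfies $Sq^1\circ Sq^1=0$ and acts as a derivation, so it is a differential on $H^*(BG;\mathbb{Z}_2)$; $H(\,\cdot\,,Sq^1)$ denotes its homology. Such generators $y_1,y_4,y_6$ exist (with $y_4,y_6$ restricting to the mod 2 reductions of the Chern classes $c_2,c_3$ on $BSU(3)$). *)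

theory Defs
  imports "HOL-Library.Poly_Mapping" "HOL-Library.Product_Plus" "HOL-Library.Z2"
begin

text \<open>Polynomial ring Z_2[y1,y4,y6]: finitely supported maps from exponent
  triples (a,b,c) (standing for the monomial y1^a y4^b y6^c) to the field bit = Z_2.\<close>
type_synonym P3 = "(nat \<times> nat \<times> nat) \<Rightarrow>\<^sub>0 bit"

definition y1 :: P3 where "y1 = Poly_Mapping.single (1, 0, 0) 1"
definition y4 :: P3 where "y4 = Poly_Mapping.single (0, 1, 0) 1"
definition y6 :: P3 where "y6 = Poly_Mapping.single (0, 0, 1) 1"

text \<open>Polynomial ring Z_2[u,v] in two variables (u will be sent to y4, v to y6^2).\<close>
type_synonym P2 = "(nat \<times> nat) \<Rightarrow>\<^sub>0 bit"

definition u :: P2 where "u = Poly_Mapping.single (1, 0) 1"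
definition v :: P2 where "v = Poly_Mapping.single (0, 1) 1"

end

theory Submission
  imports Defs
begin

text \<open>Over \<open>\<int>\<^sub>2\<close> the derivation is diagonal on monomials:
  \<open>d (y1^a y4^b y6^c) = (a + c) y1^(a+1) y4^b y6^c\<close>. So the complex is the direct sum of the
  acyclic pieces \<open>y1^a y4^b y6^c \<mapsto> y1^(a+1) y4^b y6^c\<close> with \<open>a + c\<close> odd and of the lines
  spanned by the cycles \<open>y4^b y6^c\<close> with \<open>c\<close> even, which are not boundaries. These cycles form
  the image of \<open>\<int>\<^sub>2[u,v]\<close> under the monomial embedding \<open>u \<mapsto> y4\<close>, \<open>v \<mapsto> y6^2\<close>.\<close>

lemma update_eq_add_single:
  assumes "a \<notin> Poly_Mapping.keys f"
  shows "Poly_Mapping.update a b f = f + Poly_Mapping.single a b"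
  using assms
  by (intro poly_mapping_eqI) (auto simp: lookup_update lookup_add lookup_single in_keys_iff)

lemma poly_mapping_add_single_induct [case_names zero add_single]:
  fixes P :: "('a \<Rightarrow>\<^sub>0 'b::monoid_add) \<Rightarrow> bool"
  assumes "P 0"
    and "\<And>f a b. a \<notin> Poly_Mapping.keys f \<Longrightarrow> b \<noteq> 0 \<Longrightarrow> P f \<Longrightarrow>
      P (f + Poly_Mapping.single a b)"
  shows "P f"
  by (induction f rule: update_induct) (auto simp: update_eq_add_single assms)

lemma poly_mapping_bit_add_self [simp]: "(p :: 'a \<Rightarrow>\<^sub>0 bit) + p = 0"
  by (rule poly_mapping_eqI) (simp add: lookup_add)

lemma lookup_map_key:
  "inj f \<Longrightarrow> Poly_Mapping.lookup (Poly_Mapping.map_key f p) x = Poly_Mapping.lookup p (f x)"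
  by (simp add: map_key.rep_eq)

definition embed_keys :: "('a \<Rightarrow> 'b) \<Rightarrow> ('a \<Rightarrow>\<^sub>0 'c::zero) \<Rightarrow> 'b \<Rightarrow>\<^sub>0 'c" where
  "embed_keys f p = Abs_poly_mapping (\<lambda>y. if y \<in> range f then Poly_Mapping.lookup p (inv f y) else 0)"

lemma lookup_embed_keys:
  "Poly_Mapping.lookup (embed_keys f p) y = (if y \<in> range f then Poly_Mapping.lookup p (inv f y) else 0)"
proof -
  let ?g = "\<lambda>y. if y \<in> range f then Poly_Mapping.lookup p (inv f y) else 0"
  have "{y. ?g y \<noteq> 0} \<subseteq> f ` Poly_Mapping.keys p"
  proof
    fix y
    assume "y \<in> {y. ?g y \<noteq> 0}"
    then have "y \<in> range f" and "inv f y \<in> Poly_Mapping.keys p"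
      by (auto simp: in_keys_iff split: if_splits)
    then show "y \<in> f ` Poly_Mapping.keys p"
      by (metis f_inv_into_f image_eqI)
  qed
  then have "finite {y. ?g y \<noteq> 0}"
    by (rule finite_subset) simp
  then show ?thesis
    by (simp add: embed_keys_def)
qed

lemma lookup_embed_keys_image:
  "inj f \<Longrightarrow> Poly_Mapping.lookup (embed_keys f p) (f x) = Poly_Mapping.lookup p x"
  by (simp add: lookup_embed_keys)

lemma embed_keys_add: "embed_keys f (p + q) = embed_keys f p + embed_keys f q"
  by (rule poly_mapping_eqI) (simp add: lookup_embed_keys lookup_add)

lemma embed_keys_zero [simp]: "embed_keys f 0 = 0"
  by (rule poly_mapping_eqI) (simp add: lookup_embed_keys)

lemma embed_keys_single:
  assumes "inj f"
  shows "embed_keys f (Poly_Mapping.single k x) = Poly_Mapping.single (f k) x"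
proof (rule poly_mapping_eqI)
  fix y
  show "Poly_Mapping.lookup (embed_keys f (Poly_Mapping.single k x)) y =
      Poly_Mapping.lookup (Poly_Mapping.single (f k) x) y"
    using assms by (cases "y \<in> range f") (auto simp: lookup_embed_keys lookup_single when_def inj_eq)
qed

lemma embed_keys_one:
  assumes "inj f" and "f 0 = 0"
  shows "embed_keys f 1 = (1 :: 'b::zero \<Rightarrow>\<^sub>0 'c::zero_neq_one)"
  by (metis assms embed_keys_single single_one)

context
  fixes f :: "'a::monoid_add \<Rightarrow> 'b::monoid_add"
  assumes inj: "inj f" and additive: "\<And>x y. f (x + y) = f x + f y"
begin

lemma embed_keys_mult_single:
  "embed_keys f (Poly_Mapping.single k a * q) =
     embed_keys f (Poly_Mapping.single k a) * embed_keys f (q :: 'a \<Rightarrow>\<^sub>0 'c::semiring_0)"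
proof (induction q rule: poly_mapping_add_single_induct)
  case (add_single q l b)
  then show ?case
    by (simp add: distrib_left embed_keys_add embed_keys_single[OF inj] mult_single additive)
qed simp

lemma embed_keys_mult:
  "embed_keys f (p * q) = embed_keys f p * embed_keys f (q :: 'a \<Rightarrow>\<^sub>0 'c::semiring_0)"
proof (induction p rule: poly_mapping_add_single_induct)
  case (add_single p k a)
  then show ?case
    by (simp add: distrib_right embed_keys_add embed_keys_mult_single)
qed simp

end

definition uv_key_to_y :: "nat \<times> nat \<Rightarrow> nat \<times> nat \<times> nat" where
  "uv_key_to_y = (\<lambda>(b, k). (0, b, 2 * k))"

definition phi :: "P2 \<Rightarrow> P3" where
  "phi = embed_keys uv_key_to_y"

lemma inj_uv_key_to_y: "inj uv_key_to_y"
  by (auto simp: inj_def uv_key_to_y_def)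

lemma uv_key_to_y_zero: "uv_key_to_y 0 = 0"
  by (simp add: uv_key_to_y_def zero_prod_def)

lemma uv_key_to_y_add: "uv_key_to_y (x + y) = uv_key_to_y x + uv_key_to_y y"
  by (cases x; cases y) (simp add: uv_key_to_y_def)

lemma uv_key_to_y_Pair [simp]: "uv_key_to_y (b, k) = (0, b, 2 * k)"
  by (simp add: uv_key_to_y_def)

lemma uv_key_to_y_range: "(a, b, c) \<in> range uv_key_to_y \<longleftrightarrow> a = 0 \<and> even c"
  by (auto simp: uv_key_to_y_def image_iff elim!: evenE)

lemma phi_add: "phi (p + q) = phi p + phi q"
  by (simp add: phi_def embed_keys_add)

lemma phi_mult: "phi (p * q) = phi p * phi q"
  by (simp add: phi_def embed_keys_mult[OF inj_uv_key_to_y uv_key_to_y_add])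

lemma phi_one: "phi 1 = 1"
  by (simp add: phi_def embed_keys_one[OF inj_uv_key_to_y uv_key_to_y_zero])

lemma phi_u: "phi u = y4"
  by (simp add: phi_def u_def y4_def embed_keys_single[OF inj_uv_key_to_y])

lemma phi_v: "phi v = y6 ^ 2"
  by (simp add: phi_def v_def y6_def embed_keys_single[OF inj_uv_key_to_y]
      power2_eq_square mult_single numeral_2_eq_2)

abbreviation monomial :: "nat \<Rightarrow> nat \<Rightarrow> nat \<Rightarrow> P3" where
  "monomial a b c \<equiv> Poly_Mapping.single (a, b, c) 1"

lemma monomial_mult_y1: "monomial a b c * y1 = monomial (Suc a) b c"
  by (simp add: y1_def mult_single)

lemma monomial_mult_y4: "monomial a b c * y4 = monomial a (Suc b) c"
  by (simp add: y4_def mult_single)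

lemma monomial_mult_y6: "monomial a b c * y6 = monomial a b (Suc c)"
  by (simp add: y6_def mult_single)

lemma monomial_mult_y1_y6: "monomial a b c * (y1 * y6) = monomial (Suc a) b (Suc c)"
  by (simp add: y1_def y6_def mult_single)

lemma monomial_mult_y1_sq: "monomial a b c * y1 ^ 2 = monomial (Suc (Suc a)) b c"
  by (simp add: y1_def power2_eq_square mult_single)

locale sq1_derivation =
  fixes d :: "P3 \<Rightarrow> P3"
  assumes add: "\<And>p q. d (p + q) = d p + d q"
    and leibniz: "\<And>p q. d (p * q) = d p * q + p * d q"
    and d_y1: "d y1 = y1 ^ 2"
    and d_y4: "d y4 = 0"
    and d_y6: "d y6 = y1 * y6"
begin

lemma d_zero: "d 0 = 0"
  using add[of 0 0] by simp

lemma d_one: "d 1 = 0"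
  using leibniz[of 1 1] by simp

lemma d_diff: "d (p - q) = d p - d q"
  using add[of "p - q" q] by (simp add: eq_diff_eq)

lemma d_monomial:
  "d (monomial a b c) = (if odd (a + c) then monomial (Suc a) b c else 0)"
proof (induction c arbitrary: a b)
  case 0
  show ?case
  proof (induction b arbitrary: a)
    case 0
    show ?case
    proof (induction a)
      case 0
      then show ?case by (simp add: d_one flip: zero_prod_def)
    next
      case (Suc a)
      have "d (monomial (Suc a) 0 0) = d (monomial a 0 0 * y1)"
        by (simp add: monomial_mult_y1)
      also have "\<dots> = d (monomial a 0 0) * y1 + monomial a 0 0 * y1 ^ 2"
        by (simp add: leibniz d_y1)
      finally show ?case using Suc by (auto simp: monomial_mult_y1 monomial_mult_y1_sq)
    qed
  next
    case (Suc b)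
    have "d (monomial a (Suc b) 0) = d (monomial a b 0 * y4)"
      by (simp add: monomial_mult_y4)
    also have "\<dots> = d (monomial a b 0) * y4"
      by (simp add: leibniz d_y4)
    finally show ?case using Suc by (auto simp: monomial_mult_y4)
  qed
next
  case (Suc c)
  have "d (monomial a b (Suc c)) = d (monomial a b c * y6)"
    by (simp add: monomial_mult_y6)
  also have "\<dots> = d (monomial a b c) * y6 + monomial a b c * (y1 * y6)"
    by (simp add: leibniz d_y6)
  finally show ?case using Suc by (auto simp: monomial_mult_y6 monomial_mult_y1_y6)
qed

lemma lookup_d:
  "Poly_Mapping.lookup (d z) (a, b, c) =
     (case a of 0 \<Rightarrow> 0 | Suc a' \<Rightarrow> if odd (a' + c) then Poly_Mapping.lookup z (a', b, c) else 0)"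
proof (induction z rule: poly_mapping_add_single_induct)
  case zero
  then show ?case by (simp add: d_zero split: nat.split)
next
  case (add_single z k x)
  then have "x = 1" by simp
  with add_single show ?case
    by (cases k) (auto simp: add lookup_add d_monomial lookup_single when_def split: nat.split)
qed

lemma lookup_d_0 [simp]: "Poly_Mapping.lookup (d z) (0, b, c) = 0"
  by (simp add: lookup_d)

lemma lookup_d_Suc [simp]:
  "Poly_Mapping.lookup (d z) (Suc a, b, c) = (if odd (a + c) then Poly_Mapping.lookup z (a, b, c) else 0)"
  by (simp add: lookup_d)

lemma cycle_lookup_odd:
  assumes "d z = 0" and "odd (a + c)"
  shows "Poly_Mapping.lookup z (a, b, c) = 0"
  using lookup_d_Suc[of z a b c] assms by simp

lemma cycle_divisible_by_y1_in_range:
  assumes cycle: "d z = 0" and no_y1_free: "\<And>b c. Poly_Mapping.lookup z (0, b, c) = 0"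
  shows "z \<in> range d"
proof -
  define shift :: "nat \<times> nat \<times> nat \<Rightarrow> nat \<times> nat \<times> nat"
    where "shift = (\<lambda>(a, b, c). (Suc a, b, c))"
  have "inj shift"
    by (auto simp: inj_def shift_def)
  then have lookup_w:
    "Poly_Mapping.lookup (Poly_Mapping.map_key shift z) (a, b, c) = Poly_Mapping.lookup z (Suc a, b, c)"
    for a b c by (simp add: lookup_map_key shift_def)
  have "d (Poly_Mapping.map_key shift z) = z"
  proof (rule poly_mapping_eqI)
    fix k :: "nat \<times> nat \<times> nat"
    obtain a b c where k: "k = (a, b, c)" by (cases k)
    show "Poly_Mapping.lookup (d (Poly_Mapping.map_key shift z)) k = Poly_Mapping.lookup z k"
      using cycle_lookup_odd[OF cycle, of "Suc a'" c b for a'] no_y1_free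
      by (cases a) (auto simp: k lookup_w)
  qed
  then show ?thesis
    by (metis rangeI)
qed

lemma d_phi: "d (phi p) = 0"
proof (rule poly_mapping_eqI)
  fix k :: "nat \<times> nat \<times> nat"
  obtain a b c where k: "k = (a, b, c)" by (cases k)
  show "Poly_Mapping.lookup (d (phi p)) k = Poly_Mapping.lookup 0 k"
    by (cases a) (auto simp: k phi_def lookup_embed_keys uv_key_to_y_range)
qed

lemma phi_in_range_imp_zero:
  assumes "phi p \<in> range d"
  shows "p = 0"
proof (rule poly_mapping_eqI)
  fix k :: "nat \<times> nat"
  from assms obtain w where w: "phi p = d w" by blast
  have "Poly_Mapping.lookup p k = Poly_Mapping.lookup (phi p) (uv_key_to_y k)"
    by (simp add: phi_def lookup_embed_keys_image[OF inj_uv_key_to_y])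
  also have "\<dots> = 0"
    by (cases k) (simp add: w)
  finally show "Poly_Mapping.lookup p k = Poly_Mapping.lookup 0 k"
    by simp
qed

lemma cycle_homologous_to_phi:
  assumes cycle: "d z = 0"
  shows "\<exists>p. z - phi p \<in> range d"
proof
  define p where "p = Poly_Mapping.map_key uv_key_to_y z"
  have "Poly_Mapping.lookup (z - phi p) (0, b, c) = 0" for b c
  proof (cases "even c")
    case True
    then obtain k where c: "c = 2 * k"
      by (elim evenE)
    have "Poly_Mapping.lookup (phi p) (uv_key_to_y (b, k)) = Poly_Mapping.lookup z (uv_key_to_y (b, k))"
      by (simp only: p_def phi_def lookup_embed_keys_image[OF inj_uv_key_to_y] lookup_map_key[OF inj_uv_key_to_y])
    then show ?thesis
      by (simp add: lookup_minus c)
  next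
    case False
    then show ?thesis
      by (simp add: lookup_minus phi_def lookup_embed_keys uv_key_to_y_range cycle_lookup_odd[OF cycle])
  qed
  moreover have "d (z - phi p) = 0"
    by (simp add: d_diff cycle d_phi)
  ultimately show "z - phi p \<in> range d"
    by (intro cycle_divisible_by_y1_in_range)
qed

end

theorem lemma6p6:
  fixes d :: "P3 \<Rightarrow> P3"
  assumes add: "\<And>p q. d (p + q) = d p + d q"
    and leibniz: "\<And>p q. d (p * q) = d p * q + p * d q"
    and sq: "\<And>p. d (d p) = 0"
    and d1: "d y1 = y1 ^ 2"
    and d4: "d y4 = 0"
    and d6: "d y6 = y1 * y6"
  shows "\<exists>\<phi> :: P2 \<Rightarrow> P3.
           (\<forall>p q. \<phi> (p + q) = \<phi> p + \<phi> q) \<and>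
           (\<forall>p q. \<phi> (p * q) = \<phi> p * \<phi> q) \<and>
           \<phi> 1 = 1 \<and> \<phi> u = y4 \<and> \<phi> v = y6 ^ 2 \<and>
           (\<forall>p. d (\<phi> p) = 0) \<and>
           (\<forall>z. d z = 0 \<longrightarrow> (\<exists>p. z - \<phi> p \<in> range d)) \<and>
           (\<forall>p. \<phi> p \<in> range d \<longrightarrow> p = 0)"
proof -
  interpret sq1_derivation d
    using add leibniz d1 d4 d6 by unfold_locales
  show ?thesis
    using phi_add phi_mult phi_one phi_u phi_v d_phi cycle_homologous_to_phi phi_in_range_imp_zero
    by blast
qed

end
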